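(* Let $\Delta$ be a mesh and let $A\le B$ be discrete quasi-copulas on $\Delta$. Then there exists a discrete copula $C$ on $\Delta$ with $A\le C\le B$ if and only if $L^{(A,B)}(R)\ge0$ for all $R\in\mathfrak{R}$, where $\mathfrak{R}$ consists of finite formal unions of rectangles with corners in $\Delta$.
   Context: A mesh is $\Delta=\delta_x\times\delta_y$ with $\delta_x=\{0=x_0<\dots<x_p=1\}$, $\delta_y=\{0=y_0<\dots<y_q=1\}$. For $Q:\Delta\to\mathbb{R}$ and a rectangle $[s_1,s_2]\times[t_1,t_2]$ with corners in $\Delta$, $V_Q=Q(s_1,t_1)+Q(s_2,t_2)-Q(s_2,t_1)-Q(s_1,t_2)$. $Q$ is a discrete copula if it is grounded ($Q(x,0)=Q(0,y)=0$), has neutral element $1$ ($Q(x,1)=x$, $Q(1,y)=y$) and $V_Q(R)\ge0$ for all rectangles with corners in $\Delta$; a discrete quasi-copula if grounded, with neutral element 1, and $V_Q(R)\ge0$ for all rectangles with corners in $\Delta$ having a side on the boundary of $[0,1]^2$. A rectangle here is nondegenerate ($s_1<s_2$, $t_1<t_2$); main corners: southwest and northeast; opposite corners: southeast and northwest. $\mathfrak{R}$: finite formal unions $R=R_1\sqcup\dots\sqcup R_n$ of such rectangles (repetitions allowed), with multiplicity $m_R(\mathbf{y})=\sum_i m_{R_i}(\mathbf{y})$, where $m_{R_i}(\mathbf{y})$ is $1$ at main corners, $-1$ at opposite corners, $0$ elsewhere. $L^{(A,B)}(R)=\sum_{m_R(\mathbf{y})>0}B(\mathbf{y})m_R(\mathbf{y})+\sum_{m_R(\mathbf{y})<0}A(\mathbf{y})m_R(\mathbf{y})$.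 *)

theory Defs
  imports Complex_Main "HOL-Library.Multiset"
begin

text \<open>A one-dimensional grid 0 = x_0 < ... < x_p = 1, represented by its finite set of points.\<close>
definition grid :: "real set \<Rightarrow> bool" where
  "grid X \<longleftrightarrow> finite X \<and> 0 \<in> X \<and> 1 \<in> X \<and> X \<subseteq> {0..1}"

definition mesh :: "real set \<Rightarrow> real set \<Rightarrow> bool" where
  "mesh X Y \<longleftrightarrow> grid X \<and> grid Y"

text \<open>A rectangle [s1,s2] \<times> [t1,t2] is encoded as ((s1,s2),(t1,t2)).\<close>
type_synonym rect = "(real \<times> real) \<times> (real \<times> real)"

definition is_rect :: "real set \<Rightarrow> real set \<Rightarrow> rect \<Rightarrow> bool" where
  "is_rect X Y R \<longleftrightarrow> (case R of ((s1,s2),(t1,t2)) \<Rightarrow>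
      s1 \<in> X \<and> s2 \<in> X \<and> t1 \<in> Y \<and> t2 \<in> Y \<and> s1 < s2 \<and> t1 < t2)"

definition Vol :: "(real \<Rightarrow> real \<Rightarrow> real) \<Rightarrow> rect \<Rightarrow> real" where
  "Vol Q R = (case R of ((s1,s2),(t1,t2)) \<Rightarrow> Q s1 t1 + Q s2 t2 - Q s2 t1 - Q s1 t2)"

definition grounded :: "real set \<Rightarrow> real set \<Rightarrow> (real \<Rightarrow> real \<Rightarrow> real) \<Rightarrow> bool" where
  "grounded X Y Q \<longleftrightarrow> (\<forall>x\<in>X. Q x 0 = 0) \<and> (\<forall>y\<in>Y. Q 0 y = 0)"

definition neutral_one :: "real set \<Rightarrow> real set \<Rightarrow> (real \<Rightarrow> real \<Rightarrow> real) \<Rightarrow> bool" where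
  "neutral_one X Y Q \<longleftrightarrow> (\<forall>x\<in>X. Q x 1 = x) \<and> (\<forall>y\<in>Y. Q 1 y = y)"

definition boundary_rect :: "rect \<Rightarrow> bool" where
  "boundary_rect R \<longleftrightarrow> (case R of ((s1,s2),(t1,t2)) \<Rightarrow> s1 = 0 \<or> s2 = 1 \<or> t1 = 0 \<or> t2 = 1)"

definition discrete_copula :: "real set \<Rightarrow> real set \<Rightarrow> (real \<Rightarrow> real \<Rightarrow> real) \<Rightarrow> bool" where
  "discrete_copula X Y Q \<longleftrightarrow> grounded X Y Q \<and> neutral_one X Y Q \<and>
     (\<forall>R. is_rect X Y R \<longrightarrow> Vol Q R \<ge> 0)"

definition discrete_quasi_copula :: "real set \<Rightarrow> real set \<Rightarrow> (real \<Rightarrow> real \<Rightarrow> real) \<Rightarrow> bool" where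
  "discrete_quasi_copula X Y Q \<longleftrightarrow> grounded X Y Q \<and> neutral_one X Y Q \<and>
     (\<forall>R. is_rect X Y R \<and> boundary_rect R \<longrightarrow> Vol Q R \<ge> 0)"

definition mult_rect :: "rect \<Rightarrow> real \<times> real \<Rightarrow> int" where
  "mult_rect R p = (case R of ((s1,s2),(t1,t2)) \<Rightarrow>
      if p = (s1,t1) \<or> p = (s2,t2) then 1
      else if p = (s2,t1) \<or> p = (s1,t2) then -1 else 0)"

text \<open>A finite formal union of rectangles (repetitions allowed) is a multiset of rectangles.\<close>
definition mult :: "rect multiset \<Rightarrow> real \<times> real \<Rightarrow> int" where
  "mult Rs p = (\<Sum>R\<in>#Rs. mult_rect R p)"

definition Lfun :: "real set \<Rightarrow> real set \<Rightarrow> (real \<Rightarrow> real \<Rightarrow> real) \<Rightarrow> (real \<Rightarrow> real \<Rightarrow> real)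
                     \<Rightarrow> rect multiset \<Rightarrow> real" where
  "Lfun X Y A B Rs =
     (\<Sum>p\<in>{p\<in>X \<times> Y. mult Rs p > 0}. B (fst p) (snd p) * of_int (mult Rs p)) +
     (\<Sum>p\<in>{p\<in>X \<times> Y. mult Rs p < 0}. A (fst p) (snd p) * of_int (mult Rs p))"

end

theory Submission
  imports Defs "HOL-Library.Product_Plus" "HOL-Library.Function_Algebras"
begin

text \<open>A copula between \<open>A\<close> and \<open>B\<close> is a solution of a finite linear system in the values
  \<open>C p\<close>, \<open>p \<in> \<Delta>\<close>: the box constraints \<open>A \<le> C \<le> B\<close> and nonnegativity of every rectangle
  volume (groundedness and the margins come for free, since \<open>A\<close> and \<open>B\<close> agree on the boundary).
  By Farkas' lemma, proved by Fourier--Motzkin elimination so that all multipliers stay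
  integral, the system is infeasible iff some nonnegative integer combination of its
  inequalities cancels every variable and has negative right-hand side. Reading the
  rectangle multipliers as a formal union \<open>R\<close>, the box multipliers dominate the positive and
  negative parts of \<open>m\<^sub>R\<close>, so such a combination forces \<open>L(R) < 0\<close>.\<close>

text \<open>\<open>(a, b) :: 'v ineq\<close> stands for the inequality \<open>\<Sum>\<^sub>v a v * x v \<le> b\<close>.\<close>
type_synonym 'v ineq = "('v \<Rightarrow> int) \<times> real"

definition ineq_lhs :: "'v set \<Rightarrow> ('v \<Rightarrow> real) \<Rightarrow> 'v ineq \<Rightarrow> real" where
  "ineq_lhs V x c = (\<Sum>v\<in>V. of_int (fst c v) * x v)"

definition ineq_holds :: "'v set \<Rightarrow> ('v \<Rightarrow> real) \<Rightarrow> 'v ineq \<Rightarrow> bool" where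
  "ineq_holds V x c \<longleftrightarrow> ineq_lhs V x c \<le> snd c"

definition ineq_scale :: "nat \<Rightarrow> 'v ineq \<Rightarrow> 'v ineq" where
  "ineq_scale k c = ((\<lambda>v. int k * fst c v), real k * snd c)"

lemma snd_ineq_scale [simp]: "snd (ineq_scale k c) = real k * snd c"
  by (simp add: ineq_scale_def)

inductive_set ineq_cone :: "'v ineq set \<Rightarrow> 'v ineq set" for S where
  zero: "0 \<in> ineq_cone S"
| add: "c \<in> S \<Longrightarrow> z \<in> ineq_cone S \<Longrightarrow> c + z \<in> ineq_cone S"

lemma ineq_lhs_add: "ineq_lhs V x (c + d) = ineq_lhs V x c + ineq_lhs V x d"
  by (simp add: ineq_lhs_def algebra_simps sum.distrib)

lemma ineq_lhs_scale: "ineq_lhs V x (ineq_scale k c) = real k * ineq_lhs V x c"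
  by (simp add: ineq_lhs_def ineq_scale_def sum_distrib_left algebra_simps)

lemma ineq_lhs_insert:
  assumes "finite V" "v \<notin> V"
  shows "ineq_lhs (insert v V) (x(v := t)) c = of_int (fst c v) * t + ineq_lhs V x c"
  unfolding ineq_lhs_def using assms by (simp, intro sum.cong) auto

lemma ineq_cone_base: "c \<in> S \<Longrightarrow> c \<in> ineq_cone S"
  using ineq_cone.add[OF _ ineq_cone.zero] by (metis add.right_neutral)

lemma ineq_cone_add: "z \<in> ineq_cone S \<Longrightarrow> z' \<in> ineq_cone S \<Longrightarrow> z + z' \<in> ineq_cone S"
  by (induction z rule: ineq_cone.induct) (simp_all add: add.assoc ineq_cone.add)

lemma ineq_cone_scale: "z \<in> ineq_cone S \<Longrightarrow> ineq_scale k z \<in> ineq_cone S"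
proof (induction k)
  case 0
  show ?case using ineq_cone.zero by (simp add: ineq_scale_def zero_fun_def zero_prod_def)
next
  case (Suc k)
  have "ineq_scale (Suc k) z = z + ineq_scale k z"
    by (simp add: ineq_scale_def prod_eq_iff fun_eq_iff ring_distribs)
  with ineq_cone_add[OF Suc.prems Suc.IH[OF Suc.prems]] show ?case by (simp only:)
qed

lemma ineq_cone_trans: "z \<in> ineq_cone S' \<Longrightarrow> S' \<subseteq> ineq_cone S \<Longrightarrow> z \<in> ineq_cone S"
  by (induction z rule: ineq_cone.induct) (auto intro: ineq_cone.zero ineq_cone_add)

lemma ineq_cone_coeff_zero: "z \<in> ineq_cone S \<Longrightarrow> \<forall>c\<in>S. fst c v = 0 \<Longrightarrow> fst z v = 0"
  by (induction z rule: ineq_cone.induct) auto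

lemma finite_sets_separated:
  fixes L U :: "real set"
  assumes "finite L" "finite U" "\<forall>l\<in>L. \<forall>u\<in>U. l \<le> u"
  shows "\<exists>t. (\<forall>l\<in>L. l \<le> t) \<and> (\<forall>u\<in>U. t \<le> u)"
proof (cases "U = {}")
  case True
  then show ?thesis using assms(1) by (intro exI[of _ "Max (insert 0 L)"]) auto
next
  case False
  then show ?thesis using assms by (intro exI[of _ "Min U"]) auto
qed

text \<open>Fourier--Motzkin elimination of \<open>v\<close>: each upper bound on \<open>v\<close> is combined with each
  lower bound so that \<open>v\<close> cancels.\<close>
definition eliminate :: "'v \<Rightarrow> 'v ineq set \<Rightarrow> 'v ineq set" where
  "eliminate v S = {c \<in> S. fst c v = 0} \<union>
     (\<lambda>(p, n). ineq_scale (nat (- fst n v)) p + ineq_scale (nat (fst p v)) n) `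
       ({p \<in> S. fst p v > 0} \<times> {n \<in> S. fst n v < 0})"

lemma finite_eliminate: "finite S \<Longrightarrow> finite (eliminate v S)"
  by (simp add: eliminate_def)

lemma eliminate_subset_cone: "eliminate v S \<subseteq> ineq_cone S"
proof
  fix c assume "c \<in> eliminate v S"
  then consider "c \<in> S" | p n where "p \<in> S" "n \<in> S"
    "c = ineq_scale (nat (- fst n v)) p + ineq_scale (nat (fst p v)) n"
    by (auto simp: eliminate_def)
  then show "c \<in> ineq_cone S"
    by cases (simp_all add: ineq_cone_base ineq_cone_add ineq_cone_scale)
qed

lemma eliminate_coeff_zero: "c \<in> eliminate v S \<Longrightarrow> fst c v = 0"
  by (auto simp: eliminate_def ineq_scale_def algebra_simps)

lemma eliminate_extend_solution:
  fixes V :: "'v set"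
  assumes "finite V" "v \<notin> V" "finite S" and x: "\<forall>c\<in>eliminate v S. ineq_holds V x c"
  shows "\<exists>t. \<forall>c\<in>S. ineq_holds (insert v V) (x(v := t)) c"
proof -
  define bound where "bound c = (snd c - ineq_lhs V x c) / of_int (fst c v)" for c :: "'v ineq"
  define Up where "Up = {p \<in> S. fst p v > 0}"
  define Lo where "Lo = {n \<in> S. fst n v < 0}"
  have separated: "bound n \<le> bound p" if "p \<in> Up" "n \<in> Lo" for p n
  proof -
    have pv: "fst p v > 0" and nv: "fst n v < 0" using that by (auto simp: Up_def Lo_def)
    have "ineq_holds V x (ineq_scale (nat (- fst n v)) p + ineq_scale (nat (fst p v)) n)"
      using x that by (auto simp: eliminate_def Up_def Lo_def)
    then have "- of_int (fst n v) * ineq_lhs V x p + of_int (fst p v) * ineq_lhs V x n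
        \<le> - of_int (fst n v) * snd p + of_int (fst p v) * snd n"
      using pv nv by (simp add: ineq_holds_def ineq_lhs_add ineq_lhs_scale)
    then show ?thesis using pv nv
      by (simp add: bound_def divide_simps) (simp add: algebra_simps)
  qed
  obtain t where lo: "\<forall>n\<in>Lo. bound n \<le> t" and up: "\<forall>p\<in>Up. t \<le> bound p"
    using finite_sets_separated[of "bound ` Lo" "bound ` Up"] separated assms(3)
    by (auto simp: Up_def Lo_def)
  have "ineq_holds (insert v V) (x(v := t)) c" if "c \<in> S" for c
  proof -
    have holds_iff: "ineq_holds (insert v V) (x(v := t)) c \<longleftrightarrow>
        of_int (fst c v) * t \<le> snd c - ineq_lhs V x c"
      using ineq_lhs_insert[OF assms(1,2)] by (auto simp: ineq_holds_def)
    consider "fst c v = 0" | "fst c v > 0" | "fst c v < 0" by linarith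
    then show ?thesis
    proof cases
      case 1
      then have "c \<in> eliminate v S" using that by (simp add: eliminate_def)
      then show ?thesis using x 1 holds_iff by (simp add: ineq_holds_def)
    next
      case 2
      then have "t \<le> bound c" using up that unfolding Up_def by blast
      with 2 show ?thesis using holds_iff by (simp add: bound_def pos_le_divide_eq mult.commute)
    next
      case 3
      then have "bound c \<le> t" using lo that unfolding Lo_def by blast
      with 3 show ?thesis using holds_iff by (simp add: bound_def neg_divide_le_eq mult.commute)
    qed
  qed
  then show ?thesis by blast
qed

lemma fourier_motzkin:
  assumes "finite V" "finite S" "\<not> (\<exists>x. \<forall>c\<in>S. ineq_holds V x c)"
  shows "\<exists>z\<in>ineq_cone S. (\<forall>v\<in>V. fst z v = 0) \<and> snd z < 0"
  using assms
proof (induction V arbitrary: S rule: finite_induct)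
  case empty
  then obtain c where "c \<in> S" "\<not> ineq_holds {} (\<lambda>_. 0) c" by blast
  then show ?case by (intro bexI[of _ c]) (auto simp: ineq_holds_def ineq_lhs_def ineq_cone_base)
next
  case (insert v V)
  have "\<not> (\<exists>x. \<forall>c\<in>eliminate v S. ineq_holds V x c)"
    using eliminate_extend_solution[OF insert.hyps insert.prems(1)] insert.prems(2) by blast
  then obtain z where z: "z \<in> ineq_cone (eliminate v S)" "\<forall>u\<in>V. fst z u = 0" "snd z < 0"
    using insert.IH finite_eliminate[OF insert.prems(1)] by blast
  have "fst z v = 0"
    using ineq_cone_coeff_zero[OF z(1), of v] eliminate_coeff_zero[of _ v S] by blast
  moreover have "z \<in> ineq_cone S"
    using ineq_cone_trans[OF z(1) eliminate_subset_cone] .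
  ultimately show ?case using z by auto
qed

lemma sum_fun_upd_Suc:
  fixes a :: "'i \<Rightarrow> 'a::comm_semiring_1"
  assumes "finite I" "i \<in> I"
  shows "(\<Sum>j\<in>I. of_nat ((k(i := Suc (k i))) j) * a j) = (\<Sum>j\<in>I. of_nat (k j) * a j) + a i"
  using assms by (simp add: sum.remove algebra_simps)

lemma ineq_cone_image_weights:
  assumes "z \<in> ineq_cone (g ` I)" "finite I"
  shows "\<exists>k. (\<forall>v. fst z v = (\<Sum>i\<in>I. int (k i) * fst (g i) v))
           \<and> snd z = (\<Sum>i\<in>I. real (k i) * snd (g i))"
  using assms(1)
proof (induction z rule: ineq_cone.induct)
  case zero
  show ?case by (intro exI[of _ "\<lambda>_. 0"]) simp
next
  case (add c z)
  then obtain i k where i: "i \<in> I" "c = g i"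
    and k: "\<forall>v. fst z v = (\<Sum>i\<in>I. int (k i) * fst (g i) v)"
      "snd z = (\<Sum>i\<in>I. real (k i) * snd (g i))"
    by blast
  have "fst (c + z) v = (\<Sum>j\<in>I. int ((k(i := Suc (k i))) j) * fst (g j) v)" for v
    using sum_fun_upd_Suc[OF assms(2) i(1), of k "\<lambda>j. fst (g j) v"] k i(2) by simp
  moreover have "snd (c + z) = (\<Sum>j\<in>I. real ((k(i := Suc (k i))) j) * snd (g j))"
    using sum_fun_upd_Suc[OF assms(2) i(1), of k "\<lambda>j. snd (g j)"] k i(2) by simp
  ultimately show ?case by blast
qed

theorem farkas_int_weights:
  fixes g :: "'i \<Rightarrow> 'v ineq"
  assumes "finite V" "finite I" "\<not> (\<exists>x. \<forall>i\<in>I. ineq_holds V x (g i))"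
  shows "\<exists>k. (\<forall>v\<in>V. (\<Sum>i\<in>I. int (k i) * fst (g i) v) = 0)
           \<and> (\<Sum>i\<in>I. real (k i) * snd (g i)) < 0"
proof -
  obtain z where "z \<in> ineq_cone (g ` I)" "\<forall>v\<in>V. fst z v = 0" "snd z < 0"
    using fourier_motzkin[of V "g ` I"] assms by auto
  then show ?thesis using ineq_cone_image_weights[of z g I] assms(2) by metis
qed

lemma sum_mult_rect_eq_Vol:
  assumes "is_rect X Y R" "finite X" "finite Y"
  shows "(\<Sum>p\<in>X \<times> Y. of_int (mult_rect R p) * C (fst p) (snd p)) = Vol C R"
proof -
  obtain s1 s2 t1 t2 where R: "R = ((s1, s2), (t1, t2))" by (metis prod.exhaust)
  have corners: "s1 \<in> X" "s2 \<in> X" "t1 \<in> Y" "t2 \<in> Y" "s1 < s2" "t1 < t2"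
    using assms(1) by (auto simp: is_rect_def R)
  let ?K = "{(s1, t1), (s2, t2), (s2, t1), (s1, t2)}"
  have "(\<Sum>p\<in>X \<times> Y. of_int (mult_rect R p) * C (fst p) (snd p))
      = (\<Sum>p\<in>?K. of_int (mult_rect R p) * C (fst p) (snd p))"
    by (rule sum.mono_neutral_right) (use assms(2,3) corners in \<open>auto simp: mult_rect_def R\<close>)
  also have "\<dots> = Vol C R"
    using corners by (simp add: mult_rect_def Vol_def R)
  finally show ?thesis .
qed

lemma mult_empty [simp]: "mult {#} p = 0"
  by (simp add: mult_def)

lemma mult_add_mset [simp]: "mult (add_mset R Rs) p = mult_rect R p + mult Rs p"
  by (simp add: mult_def)

lemma mult_sum_replicate:
  assumes "finite RS"
  shows "mult (\<Sum>R\<in>RS. replicate_mset (w R) R) p = (\<Sum>R\<in>RS. int (w R) * mult_rect R p)"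
  using assms by (induction RS rule: finite_induct) (simp_all add: mult_def)

lemma sum_mult_eq_sum_Vol:
  assumes "finite X" "finite Y" "\<forall>R\<in>#Rs. is_rect X Y R"
  shows "(\<Sum>p\<in>X \<times> Y. of_int (mult Rs p) * C (fst p) (snd p)) = (\<Sum>R\<in>#Rs. Vol C R)"
  using assms(3)
proof (induction Rs)
  case (add R Rs)
  then show ?case
    using sum_mult_rect_eq_Vol[OF _ assms(1,2), of R C] by (simp add: distrib_right sum.distrib)
qed simp

lemma Lfun_eq_sum_max_min:
  assumes "finite X" "finite Y"
  shows "Lfun X Y A B Rs = (\<Sum>p\<in>X \<times> Y. of_int (max (mult Rs p) 0) * B (fst p) (snd p)
                                        + of_int (min (mult Rs p) 0) * A (fst p) (snd p))"
  unfolding Lfun_def sum.inter_filter[OF finite_cartesian_product[OF assms]] sum.distrib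
  by (intro arg_cong2[where f = "(+)"] sum.cong) auto

lemma mult_le_max_min:
  fixes a b c :: real
  assumes "a \<le> c" "c \<le> b"
  shows "of_int m * c \<le> of_int (max m 0) * b + of_int (min m 0) * a"
  using assms by (cases "m \<ge> 0") (auto intro: mult_left_mono mult_left_mono_neg)

lemma max_min_le_weights:
  fixes a b :: real
  assumes "a \<le> b" "m = int u - int l"
  shows "of_int (max m 0) * b + of_int (min m 0) * a \<le> real u * b - real l * a"
proof -
  define d where "d = min u l"
  have max_min: "of_int (max m 0) = real u - real d" "of_int (min m 0) = real d - real l"
    using assms(2) by (auto simp: d_def)
  have "of_int (max m 0) * b + of_int (min m 0) * a = real u * b - real l * a - real d * (b - a)"
    unfolding max_min by (simp add: algebra_simps)
  moreover have "real d * (b - a) \<ge> 0" using assms(1) by simp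
  ultimately show ?thesis by linarith
qed

lemma Lfun_nonneg_if_copula_between:
  assumes "finite X" "finite Y" "discrete_copula X Y C"
    and "\<forall>x\<in>X. \<forall>y\<in>Y. A x y \<le> C x y \<and> C x y \<le> B x y" and "\<forall>R\<in>#Rs. is_rect X Y R"
  shows "Lfun X Y A B Rs \<ge> 0"
proof -
  have "Vol C R \<ge> 0" if "R \<in># Rs" for R
    using assms(3,5) that unfolding discrete_copula_def by blast
  then have "0 \<le> (\<Sum>R\<in>#Rs. Vol C R)"
    using sum_mset_mono[of Rs "\<lambda>_. 0" "Vol C"] by simp
  also have "\<dots> = (\<Sum>p\<in>X \<times> Y. of_int (mult Rs p) * C (fst p) (snd p))"
    using sum_mult_eq_sum_Vol[OF assms(1,2,5)] by simp
  also have "\<dots> \<le> Lfun X Y A B Rs"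
    unfolding Lfun_eq_sum_max_min[OF assms(1,2)] using assms(4)
    by (intro sum_mono mult_le_max_min) auto
  finally show ?thesis .
qed

lemma grounded_neutral_one_between:
  assumes "mesh X Y" "grounded X Y A" "neutral_one X Y A" "grounded X Y B" "neutral_one X Y B"
    and "\<forall>x\<in>X. \<forall>y\<in>Y. A x y \<le> C x y \<and> C x y \<le> B x y"
  shows "grounded X Y C \<and> neutral_one X Y C"
proof -
  have "0 \<in> X" "1 \<in> X" "0 \<in> Y" "1 \<in> Y"
    using assms(1) by (auto simp: mesh_def grid_def)
  with assms(2-6) show ?thesis
    unfolding grounded_def neutral_one_def by (metis order_antisym)
qed

datatype copula_ineq = Upper "real \<times> real" | Lower "real \<times> real" | Volume rect

definition copula_system ::
  "(real \<Rightarrow> real \<Rightarrow> real) \<Rightarrow> (real \<Rightarrow> real \<Rightarrow> real) \<Rightarrow> copula_ineq \<Rightarrow> (real \<times> real) ineq" where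
  "copula_system A B i = (case i of
      Upper p \<Rightarrow> ((\<lambda>q. of_bool (q = p)), B (fst p) (snd p))
    | Lower p \<Rightarrow> ((\<lambda>q. - of_bool (q = p)), - A (fst p) (snd p))
    | Volume R \<Rightarrow> ((\<lambda>q. - mult_rect R q), 0))"

definition copula_ineqs :: "real set \<Rightarrow> real set \<Rightarrow> copula_ineq set" where
  "copula_ineqs X Y = Upper ` (X \<times> Y) \<union> Lower ` (X \<times> Y) \<union> Volume ` {R. is_rect X Y R}"

lemma finite_rects: "finite X \<Longrightarrow> finite Y \<Longrightarrow> finite {R. is_rect X Y R}"
  by (rule finite_subset[of _ "(X \<times> X) \<times> (Y \<times> Y)"]) (auto simp: is_rect_def)

lemma finite_copula_ineqs: "finite X \<Longrightarrow> finite Y \<Longrightarrow> finite (copula_ineqs X Y)"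
  by (simp add: copula_ineqs_def finite_rects)

lemma sum_copula_ineqs:
  assumes "finite X" "finite Y"
  shows "(\<Sum>i\<in>copula_ineqs X Y. h i) = (\<Sum>p\<in>X \<times> Y. h (Upper p)) + (\<Sum>p\<in>X \<times> Y. h (Lower p))
           + (\<Sum>R\<in>{R. is_rect X Y R}. h (Volume R))"
proof -
  let ?U = "Upper ` (X \<times> Y)" and ?L = "Lower ` (X \<times> Y)" and ?V = "Volume ` {R. is_rect X Y R}"
  have fin: "finite ?U" "finite ?L" "finite ?V" using assms finite_rects[OF assms] by auto
  have "sum h (?U \<union> ?L \<union> ?V) = sum h (?U \<union> ?L) + sum h ?V"
    by (rule sum.union_disjoint) (use fin in auto)
  also have "sum h (?U \<union> ?L) = sum h ?U + sum h ?L"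
    by (rule sum.union_disjoint) (use fin in auto)
  finally show ?thesis
    unfolding copula_ineqs_def by (simp add: sum.reindex inj_on_def)
qed

lemma ineq_holds_copula_system_Upper_Lower:
  assumes "finite X" "finite Y" "p \<in> X \<times> Y"
  shows "ineq_holds (X \<times> Y) x (copula_system A B (Upper p)) \<longleftrightarrow> x p \<le> B (fst p) (snd p)"
    and "ineq_holds (X \<times> Y) x (copula_system A B (Lower p)) \<longleftrightarrow> A (fst p) (snd p) \<le> x p"
  using assms by (simp_all add: ineq_holds_def ineq_lhs_def copula_system_def sum_negf)

lemma ineq_holds_copula_system_Volume:
  assumes "finite X" "finite Y" "is_rect X Y R"
  shows "ineq_holds (X \<times> Y) x (copula_system A B (Volume R)) \<longleftrightarrow> Vol (\<lambda>a b. x (a, b)) R \<ge> 0"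
  using sum_mult_rect_eq_Vol[OF assms(3,1,2), of "\<lambda>a b. x (a, b)"]
  by (simp add: ineq_holds_def ineq_lhs_def copula_system_def sum_negf)

lemma copula_of_copula_system_solution:
  assumes "mesh X Y" "discrete_quasi_copula X Y A" "discrete_quasi_copula X Y B"
    and x: "\<forall>i\<in>copula_ineqs X Y. ineq_holds (X \<times> Y) x (copula_system A B i)"
  defines "C \<equiv> \<lambda>a b. x (a, b)"
  shows "discrete_copula X Y C \<and> (\<forall>a\<in>X. \<forall>b\<in>Y. A a b \<le> C a b \<and> C a b \<le> B a b)"
proof -
  have fin: "finite X" "finite Y" using assms(1) by (auto simp: mesh_def grid_def)
  have between: "\<forall>a\<in>X. \<forall>b\<in>Y. A a b \<le> C a b \<and> C a b \<le> B a b"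
  proof (intro ballI)
    fix a b assume "a \<in> X" "b \<in> Y"
    then have "Upper (a, b) \<in> copula_ineqs X Y" "Lower (a, b) \<in> copula_ineqs X Y"
      by (auto simp: copula_ineqs_def)
    with x \<open>a \<in> X\<close> \<open>b \<in> Y\<close> show "A a b \<le> C a b \<and> C a b \<le> B a b"
      using ineq_holds_copula_system_Upper_Lower[OF fin, of "(a, b)" x A B] by (simp add: C_def)
  qed
  have "Vol C R \<ge> 0" if "is_rect X Y R" for R
  proof -
    have "Volume R \<in> copula_ineqs X Y" using that by (simp add: copula_ineqs_def)
    with x show ?thesis
      using ineq_holds_copula_system_Volume[OF fin that, of x A B] by (simp add: C_def)
  qed
  moreover have "grounded X Y C \<and> neutral_one X Y C"
    using grounded_neutral_one_between[OF assms(1) _ _ _ _ between] assms(2,3)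
    by (simp add: discrete_quasi_copula_def)
  ultimately show ?thesis using between by (simp add: discrete_copula_def)
qed

lemma negative_Lfun_of_certificate:
  assumes "finite X" "finite Y" "\<forall>x\<in>X. \<forall>y\<in>Y. A x y \<le> B x y"
    and coeff: "\<forall>q\<in>X \<times> Y. (\<Sum>i\<in>copula_ineqs X Y. int (k i) * fst (copula_system A B i) q) = 0"
    and rhs: "(\<Sum>i\<in>copula_ineqs X Y. real (k i) * snd (copula_system A B i)) < 0"
  shows "\<exists>Rs. (\<forall>R\<in>#Rs. is_rect X Y R) \<and> Lfun X Y A B Rs < 0"
proof -
  define Rs where "Rs = (\<Sum>R\<in>{R. is_rect X Y R}. replicate_mset (k (Volume R)) R)"
  have rects: "\<forall>R\<in>#Rs. is_rect X Y R"
    by (auto simp: Rs_def set_mset_sum finite_rects[OF assms(1,2)] split: if_splits)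
  have mult_eq: "mult Rs q = int (k (Upper q)) - int (k (Lower q))" if "q \<in> X \<times> Y" for q
  proof -
    have "(\<Sum>i\<in>copula_ineqs X Y. int (k i) * fst (copula_system A B i) q) = 0"
      using coeff that by blast
    moreover have "(X \<times> Y) \<inter> {p. q = p} = {q}" using that by auto
    ultimately show ?thesis using assms(1,2)
      by (simp add: sum_copula_ineqs[OF assms(1,2)] copula_system_def Rs_def
          mult_sum_replicate finite_rects[OF assms(1,2)] sum_negf)
  qed
  have "Lfun X Y A B Rs \<le> (\<Sum>p\<in>X \<times> Y. real (k (Upper p)) * B (fst p) (snd p)
                                     - real (k (Lower p)) * A (fst p) (snd p))"
    unfolding Lfun_eq_sum_max_min[OF assms(1,2)] using assms(3) mult_eq
    by (intro sum_mono max_min_le_weights) auto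
  also have "\<dots> < 0"
    using rhs by (simp add: sum_copula_ineqs[OF assms(1,2)] copula_system_def sum_subtractf sum_negf)
  finally show ?thesis using rects by blast
qed

theorem mainTheorem14:
  fixes X Y :: "real set" and A B :: "real \<Rightarrow> real \<Rightarrow> real"
  assumes "mesh X Y"
    and "discrete_quasi_copula X Y A" and "discrete_quasi_copula X Y B"
    and "\<forall>x\<in>X. \<forall>y\<in>Y. A x y \<le> B x y"
  shows "(\<exists>C. discrete_copula X Y C \<and> (\<forall>x\<in>X. \<forall>y\<in>Y. A x y \<le> C x y \<and> C x y \<le> B x y))
     \<longleftrightarrow> (\<forall>Rs. (\<forall>R\<in>#Rs. is_rect X Y R) \<longrightarrow> Lfun X Y A B Rs \<ge> 0)"
proof -
  have fin: "finite X" "finite Y" using assms(1) by (auto simp: mesh_def grid_def)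
  show ?thesis
  proof
    assume "\<exists>C. discrete_copula X Y C \<and> (\<forall>x\<in>X. \<forall>y\<in>Y. A x y \<le> C x y \<and> C x y \<le> B x y)"
    then show "\<forall>Rs. (\<forall>R\<in>#Rs. is_rect X Y R) \<longrightarrow> Lfun X Y A B Rs \<ge> 0"
      using Lfun_nonneg_if_copula_between[OF fin] by blast
  next
    assume L: "\<forall>Rs. (\<forall>R\<in>#Rs. is_rect X Y R) \<longrightarrow> Lfun X Y A B Rs \<ge> 0"
    show "\<exists>C. discrete_copula X Y C \<and> (\<forall>x\<in>X. \<forall>y\<in>Y. A x y \<le> C x y \<and> C x y \<le> B x y)"
    proof (rule ccontr)
      assume "\<not> ?thesis"
      then have "\<not> (\<exists>x. \<forall>i\<in>copula_ineqs X Y. ineq_holds (X \<times> Y) x (copula_system A B i))"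
        using copula_of_copula_system_solution[OF assms(1-3)] by blast
      then obtain k where
        "\<forall>q\<in>X \<times> Y. (\<Sum>i\<in>copula_ineqs X Y. int (k i) * fst (copula_system A B i) q) = 0"
        "(\<Sum>i\<in>copula_ineqs X Y. real (k i) * snd (copula_system A B i)) < 0"
        using farkas_int_weights[of "X \<times> Y" "copula_ineqs X Y"] fin finite_copula_ineqs by blast
      then show False
        using negative_Lfun_of_certificate[OF fin assms(4)] L by fastforce
    qed
  qed
qed

end
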